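(* Let $m,n$ be non-negative integers. For $y\in\mathbb{R}$ define \[ R_{m,n}(y)=\int_{-1}^1U_n(x)\,U_{n+m}(x+y)\sqrt{1-x^2}\,dx . \] Then \[ R_{m,n}(y)=\dfrac{\pi\,\Gamma(m+n+1)}{\Gamma(m+1)\Gamma(n+1)}2^{m-1}y^m\ {}_4F_3\left(\begin{array}{c}-\frac{m}{2},\frac{1-m}{2},\frac{1-m}{2},\frac{2-m}{2}\\ 1-m,\ -m-n,\ n+2\end{array};\dfrac{4}{y^2}\right). \]
   Context: $U_n$ is the Chebyshev polynomial of the second kind, $U_n(\cos\theta)=\frac{\sin((n+1)\theta)}{\sin\theta}$. ${}_4F_3$ is the generalized hypergeometric series $\sum_k\frac{(a_1)_k\cdots(a_4)_k}{(b_1)_k(b_2)_k(b_3)_k}\frac{z^k}{k!}$ with $(a)_k$ the Pochhammer symbol; here it terminates (at the first upper parameter that is a non-positive integer), so $y^m\,{}_4F_3(\dots;4/y^2)$ is a polynomial in $y$ and the right-hand side is understood as this polynomial. *)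

theory Defs
  imports "HOL-Analysis.Analysis"
begin

fun chebyU :: "nat \<Rightarrow> real \<Rightarrow> real" where
  "chebyU 0 x = 1"
| "chebyU (Suc 0) x = 2 * x"
| "chebyU (Suc (Suc n)) x = 2 * x * chebyU (Suc n) x - chebyU n x"

definition hyp_coeff :: "real list \<Rightarrow> real list \<Rightarrow> nat \<Rightarrow> real" where
  "hyp_coeff as bs k =
     prod_list (map (\<lambda>a. pochhammer a k) as) / prod_list (map (\<lambda>b. pochhammer b k) bs) / fact k"

definition R_int :: "nat \<Rightarrow> nat \<Rightarrow> real \<Rightarrow> real" where
  "R_int m n y = integral {-1..1} (\<lambda>x. chebyU n x * chebyU (n + m) (x + y) * sqrt (1 - x\<^sup>2))"

text \<open>The polynomial y^m * 4F3(-m/2,(1-m)/2,(1-m)/2,(2-m)/2; 1-m,-m-n,n+2; 4/y^2):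
  the series terminates at k = m div 2 (upper parameter -m/2 resp. (1-m)/2), and
  y^m (4/y^2)^k is read as the monomial 4^k y^(m-2k).\<close>
definition F43_poly :: "nat \<Rightarrow> nat \<Rightarrow> real \<Rightarrow> real" where
  "F43_poly m n y =
     (\<Sum>k\<le>m div 2.
        hyp_coeff [- real m / 2, (1 - real m) / 2, (1 - real m) / 2, (2 - real m) / 2]
                  [1 - real m, - real m - real n, real n + 2] k
        * 4 ^ k * y ^ (m - 2 * k))"

end

theory Submission
  imports Defs "HOL-Computational_Algebra.Polynomial"
begin

(*
  Put W_0 = 0, W_k = U_(k-1) and J(i,j;y) = integral_{-1}^1 W_i(x) W_j(x+y) sqrt(1-x^2) dx,
  so that R_{m,n}(y) = J(n+1, n+m+1; y).  Expanding W_(j+2)(x+y) by the three-term recurrence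
  and using 2x W_i(x) = W_(i+1)(x) + W_(i-1)(x) gives
    J(i, j+2) = 2y J(i, j+1) + J(i+1, j+1) + J(i-1, j+1) - J(i, j),
  and orthogonality (substitute x = cos t) gives J(i,0) = 0, J(i,1) = [i = 1] pi/2.
  These determine J, and they are satisfied by pi times the polynomial whose coefficient of y^q
  is 2^(q-1) C(k+q-1,k) C(i+k+q-1,q) i/(i+k) when j = i+q+2k, and 0 otherwise: by the
  ratios of these weights under unit shifts of q, k and i, the recurrence becomes a polynomial
  identity.  For i = n+1, j = n+m+1 and q = m-2k, the ratio of consecutive weights in k is
  that of consecutive terms of the 4F3 series.
*)

lemma chebyU_cos: "chebyU n (cos t) * sin t = sin (real (Suc n) * t)"
proof (induction n rule: induct_nat_012)
  case (ge2 n)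
  have "chebyU (Suc (Suc n)) (cos t) * sin t
      = 2 * cos t * (chebyU (Suc n) (cos t) * sin t) - chebyU n (cos t) * sin t"
    by (simp add: algebra_simps)
  also have "\<dots> = 2 * cos t * sin (real (Suc (Suc n)) * t) - sin (real (Suc n) * t)"
    by (simp only: ge2)
  also have "\<dots> = sin (real (Suc (Suc (Suc n))) * t)"
    using sin_add[of "real (Suc (Suc n)) * t" t] sin_diff[of "real (Suc (Suc n)) * t" t]
    by (simp add: algebra_simps)
  finally show ?case .
qed (simp_all add: sin_double)

lemma continuous_on_chebyU [continuous_intros]:
  assumes "continuous_on A f"
  shows "continuous_on A (\<lambda>x. chebyU n (f x))"
proof (induction n rule: induct_nat_012)
  case (ge2 n)
  then show ?case
    by (simp only: chebyU.simps) (intro continuous_intros assms)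
qed (auto intro!: continuous_intros assms)

lemma has_integral_cos_multiple:
  "((\<lambda>t. cos (real k * t)) has_integral (if k = 0 then pi else 0)) {-pi..0}"
proof (cases "k = 0")
  case False
  have "((\<lambda>t. cos (real k * t)) has_integral sin (real k * 0) / k - sin (real k * -pi) / k) {-pi..0}"
    by (intro fundamental_theorem_of_calculus)
       (use False in \<open>auto intro!: derivative_eq_intros simp: has_real_derivative_iff_has_vector_derivative[symmetric]\<close>)
  then show ?thesis
    using False by (simp only: mult_minus_right sin_minus sin_npi) simp
qed (use has_integral_const_real[of "1::real" "-pi" 0] in \<open>simp add: real_scaleR_def\<close>)

lemma has_integral_chebyU_weight:
  "((\<lambda>x. chebyU k x * sqrt (1 - x\<^sup>2)) has_integral (if k = 0 then pi / 2 else 0)) {-1..1}"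
proof -
  define f where "f = (\<lambda>x. chebyU k x * sqrt (1 - x\<^sup>2))"
  define g where "g t = (cos (real k * t) - cos (real (k + 2) * t)) / 2" for t
  have f_cont: "continuous_on {-1..1} f"
    unfolding f_def by (intro continuous_intros)
  have subst: "((\<lambda>t. (- sin t) *\<^sub>R f (cos t)) has_integral integral {cos (-pi)..cos 0} f) {-pi..0}"
    by (rule has_integral_substitution[where c = "-1" and d = 1])
       (use f_cont in \<open>auto intro!: derivative_eq_intros\<close>)
  have "(- sin t) *\<^sub>R f (cos t) = g t" if "t \<in> {-pi..0}" for t
  proof -
    have "sin t \<le> 0"
      using sin_ge_zero[of "-t"] that by simp
    then have "sqrt (1 - (cos t)\<^sup>2) = - sin t"
      by (simp flip: sin_squared_eq)
    then have "(- sin t) *\<^sub>R f (cos t) = (chebyU k (cos t) * sin t) * sin t"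
      by (simp add: f_def)
    also have "\<dots> = sin (real (Suc k) * t) * sin t"
      by (simp only: chebyU_cos)
    also have "\<dots> = g t"
      unfolding sin_times_sin g_def by (simp add: algebra_simps)
    finally show ?thesis .
  qed
  then have "(g has_integral integral {-1..1} f) {-pi..0}"
    using subst unfolding cos_minus cos_pi cos_zero by (rule has_integral_eq)
  moreover have "(g has_integral (if k = 0 then pi / 2 else 0)) {-pi..0}"
    using has_integral_divide[OF has_integral_diff[OF
        has_integral_cos_multiple[of k] has_integral_cos_multiple[of "k + 2"]], of 2]
    unfolding g_def by (cases "k = 0") simp_all
  ultimately have "integral {-1..1} f = (if k = 0 then pi / 2 else 0)"
    by (rule has_integral_unique)
  moreover have "(f has_integral integral {-1..1} f) {-1..1}"
    by (intro integrable_integral integrable_continuous_interval) fact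
  ultimately show ?thesis
    by (simp add: f_def)
qed

(* W_k = U_(k-1): with W_0 = 0 the recurrence 2x W_k = W_(k+1) + W_(k-1) holds for all k >= 1. *)
fun chebyU_shift :: "nat \<Rightarrow> real \<Rightarrow> real" where
  "chebyU_shift 0 x = 0"
| "chebyU_shift (Suc k) x = chebyU k x"

lemma chebyU_shift_rec: "chebyU_shift (Suc (Suc k)) x = 2 * x * chebyU_shift (Suc k) x - chebyU_shift k x"
  by (cases k) simp_all

lemma continuous_on_chebyU_shift [continuous_intros]:
  "continuous_on A f \<Longrightarrow> continuous_on A (\<lambda>x. chebyU_shift k (f x))"
  by (cases k) (auto intro!: continuous_intros)

definition cheb_corr :: "nat \<Rightarrow> nat \<Rightarrow> real \<Rightarrow> real" where
  "cheb_corr i j y = integral {-1..1} (\<lambda>x. chebyU_shift i x * chebyU_shift j (x + y) * sqrt (1 - x\<^sup>2))"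

lemma has_integral_cheb_corr:
  "((\<lambda>x. chebyU_shift i x * chebyU_shift j (x + y) * sqrt (1 - x\<^sup>2)) has_integral cheb_corr i j y) {-1..1}"
  unfolding cheb_corr_def
  by (intro integrable_integral integrable_continuous_interval continuous_intros)

lemma cheb_corr_0_left [simp]: "cheb_corr 0 j y = 0"
  by (simp add: cheb_corr_def)

lemma cheb_corr_0_right [simp]: "cheb_corr i 0 y = 0"
  by (simp add: cheb_corr_def)

lemma cheb_corr_1_right: "cheb_corr i 1 y = (if i = 1 then pi / 2 else 0)"
proof (cases i)
  case (Suc k)
  then show ?thesis
    using has_integral_chebyU_weight[of k] by (simp add: cheb_corr_def integral_unique)
qed simp

lemma cheb_corr_rec:
  "cheb_corr (Suc i) (Suc (Suc j)) y = 2 * y * cheb_corr (Suc i) (Suc j) y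
     + cheb_corr (Suc (Suc i)) (Suc j) y + cheb_corr i (Suc j) y - cheb_corr (Suc i) j y"
proof -
  let ?w = "\<lambda>x. sqrt (1 - x\<^sup>2)"
  have pointwise: "chebyU_shift (Suc i) x * chebyU_shift (Suc (Suc j)) (x + y) * ?w x
     = 2 * y * (chebyU_shift (Suc i) x * chebyU_shift (Suc j) (x + y) * ?w x)
       + chebyU_shift (Suc (Suc i)) x * chebyU_shift (Suc j) (x + y) * ?w x
       + chebyU_shift i x * chebyU_shift (Suc j) (x + y) * ?w x
       - chebyU_shift (Suc i) x * chebyU_shift j (x + y) * ?w x" for x
    by (simp only: chebyU_shift_rec) (cases i; simp add: algebra_simps)
  have "((\<lambda>x. chebyU_shift (Suc i) x * chebyU_shift (Suc (Suc j)) (x + y) * ?w x) has_integral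
      2 * y * cheb_corr (Suc i) (Suc j) y + cheb_corr (Suc (Suc i)) (Suc j) y
        + cheb_corr i (Suc j) y - cheb_corr (Suc i) j y) {-1..1}"
    unfolding pointwise
    by (intro has_integral_diff has_integral_add has_integral_mult_right has_integral_cheb_corr)
  then show ?thesis
    unfolding cheb_corr_def[of "Suc i" "Suc (Suc j)"] by (rule integral_unique)
qed

definition corr_weight :: "nat \<Rightarrow> nat \<Rightarrow> nat \<Rightarrow> real" where
  "corr_weight q k i = real ((k + q - 1) choose k) * real ((i + k + q - 1) choose q) * real i / real (i + k)"

lemma corr_weight_0_right [simp]: "corr_weight q k 0 = 0"
  by (simp add: corr_weight_def)

lemma corr_weight_0_0 [simp]: "i > 0 \<Longrightarrow> corr_weight 0 0 i = 1"
  by (simp add: corr_weight_def)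

lemma corr_weight_0_Suc [simp]: "corr_weight 0 (Suc k) i = 0"
  by (simp add: corr_weight_def)

lemma corr_weight_Suc_left:
  "corr_weight (Suc q) k i * (real q * (real q + 1))
     = corr_weight q k i * ((real k + real q) * (real i + real k + real q))"
proof (cases "i = 0")
  case False
  have q: "real q * real ((k + q) choose k) = real (k + q) * real ((k + q - 1) choose k)"
    using arg_cong [OF binomial_absorb_comp [of "k + q" k], of real] by simp
  have iq: "real (Suc q) * real ((i + k + q) choose Suc q)
      = real (i + k + q) * real ((i + k + q - 1) choose q)"
    using arg_cong [OF binomial_absorption [of q "i + k + q"], of real] by (simp add: algebra_simps)
  have "corr_weight (Suc q) k i * (real q * (real q + 1))
      = (real q * real ((k + q) choose k)) * (real (Suc q) * real ((i + k + q) choose Suc q))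
        * real i / real (i + k)"
    using False by (simp add: corr_weight_def field_simps)
  also have "\<dots> = corr_weight q k i * ((real k + real q) * (real i + real k + real q))"
    unfolding q iq using False by (simp add: corr_weight_def field_simps)
  finally show ?thesis .
qed simp

lemma corr_weight_Suc_middle:
  "corr_weight q (Suc k) i * ((real k + 1) * (real i + real k + 1))
     = corr_weight q k i * ((real k + real q) * (real i + real k + real q))"
proof (cases "i = 0")
  case False
  have k: "real (Suc k) * real ((k + q) choose Suc k) = real (k + q) * real ((k + q - 1) choose k)"
    using arg_cong [OF binomial_absorption [of k "k + q"], of real] by (simp add: algebra_simps)
  have ik: "real (i + k) * real ((i + k + q) choose q)
      = real (i + k + q) * real ((i + k + q - 1) choose q)"
    using arg_cong [OF binomial_absorb_comp [of "i + k + q" q], of real] by simp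
  have "corr_weight q (Suc k) i * ((real k + 1) * (real i + real k + 1))
      = (real (Suc k) * real ((k + q) choose Suc k)) * (real (i + k) * real ((i + k + q) choose q))
        * real i / real (i + k)"
    using False by (simp add: corr_weight_def field_simps)
  also have "\<dots> = corr_weight q k i * ((real k + real q) * (real i + real k + real q))"
    unfolding k ik using False by (simp add: corr_weight_def field_simps)
  finally show ?thesis .
qed simp

lemma corr_weight_Suc_right:
  "corr_weight q k (Suc i) * (real i * (real i + real k + 1))
     = corr_weight q k i * ((real i + real k + real q) * (real i + 1))"
proof (cases "i = 0")
  case False
  have ik: "real (i + k) * real ((i + k + q) choose q)
      = real (i + k + q) * real ((i + k + q - 1) choose q)"
    using arg_cong [OF binomial_absorb_comp [of "i + k + q" q], of real] by simp
  have "corr_weight q k (Suc i) * (real i * (real i + real k + 1))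
      = real ((k + q - 1) choose k) * (real (i + k) * real ((i + k + q) choose q))
        * real i * real (Suc i) / real (i + k)"
    using False by (simp add: corr_weight_def field_simps)
  also have "\<dots> = corr_weight q k i * ((real i + real k + real q) * (real i + 1))"
    unfolding ik using False by (simp add: corr_weight_def field_simps)
  finally show ?thesis .
qed simp

lemma corr_weight_rec:
  "corr_weight (Suc q) (Suc k) (Suc i) = corr_weight q (Suc k) (Suc i)
     + corr_weight (Suc q) k (Suc (Suc i)) - corr_weight (Suc q) k (Suc i) + corr_weight (Suc q) (Suc k) i"
proof -
  define B where "B = corr_weight (Suc q) k (Suc i)"
  define T where "T = corr_weight (Suc q) (Suc k) (Suc i)"
  define b c where "b = real q" and "c = real i"
  define d1 d2 d3 where "d1 = real k + 1" and "d2 = c + 1" and "d3 = c + real k + 2"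
  define p1 p2 where "p1 = real k + b + 1" and "p2 = c + real k + b + 2"
  have nonzero: "d1 \<noteq> 0" "d2 \<noteq> 0" "d3 \<noteq> 0" "p1 \<noteq> 0" "p2 \<noteq> 0"
    by (simp_all add: d1_def d2_def d3_def p1_def p2_def b_def c_def add_nonneg_pos)
  have T: "T = B * (p1 * p2) / (d1 * d3)"
    using corr_weight_Suc_middle [of "Suc q" k "Suc i"]
    by (intro eq_divide_imp)
       (simp add: nonzero, simp add: d1_def d3_def p1_def p2_def b_def c_def B_def T_def algebra_simps)
  have left: "corr_weight q (Suc k) (Suc i) = T * (b * (b + 1)) / (p1 * p2)"
    using corr_weight_Suc_left [of q "Suc k" "Suc i"]
    by (intro eq_divide_imp)
       (simp add: nonzero, simp add: p1_def p2_def b_def c_def T_def algebra_simps)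
  have right1: "corr_weight (Suc q) k (Suc (Suc i)) = B * (p2 * (c + 2)) / (d2 * d3)"
    using corr_weight_Suc_right [of "Suc q" k "Suc i"]
    by (intro eq_divide_imp)
       (simp add: nonzero, simp add: d2_def d3_def p2_def b_def c_def B_def algebra_simps)
  have right2: "corr_weight (Suc q) (Suc k) i = T * (c * d3) / (p2 * d2)"
    using corr_weight_Suc_right [of "Suc q" "Suc k" i]
    by (intro eq_divide_imp)
       (simp add: nonzero, simp add: d2_def d3_def p2_def b_def c_def T_def algebra_simps)
  show ?thesis
    unfolding T_def [symmetric] B_def [symmetric] left right1 right2 T
    by (simp add: nonzero divide_simps) (simp add: d1_def d2_def d3_def p1_def p2_def algebra_simps)
qed

lemma corr_weight_pascal:
  "corr_weight (Suc q) 0 (Suc i) = corr_weight q 0 (Suc i) + corr_weight (Suc q) 0 i"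
  by (cases i) (simp_all add: corr_weight_def)

definition corr_coeff :: "nat \<Rightarrow> nat \<Rightarrow> nat \<Rightarrow> real" where
  "corr_coeff i j q =
     (if i + q \<le> j \<and> even (j - i - q) then 2 ^ q / 2 * corr_weight q ((j - i - q) div 2) i else 0)"

lemma corr_coeff_eq: "j = i + q + 2 * k \<Longrightarrow> corr_coeff i j q = 2 ^ q / 2 * corr_weight q k i"
  by (simp add: corr_coeff_def)

lemma corr_coeff_eq_0:
  assumes "\<And>k. j \<noteq> i + q + 2 * k"
  shows "corr_coeff i j q = 0"
proof -
  have "\<not> (i + q \<le> j \<and> even (j - i - q))"
  proof
    assume le_even: "i + q \<le> j \<and> even (j - i - q)"
    then obtain k where "j - i - q = 2 * k"
      by (blast elim: evenE)
    with le_even have "j = i + q + 2 * k"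
      by linarith
    with assms show False
      by blast
  qed
  then show ?thesis
    unfolding corr_coeff_def by (rule if_not_P)
qed

lemma corr_coeff_rec:
  "corr_coeff (Suc i) (Suc (Suc j)) q = (if q = 0 then 0 else 2 * corr_coeff (Suc i) (Suc j) (q - 1))
     + corr_coeff (Suc (Suc i)) (Suc j) q + corr_coeff i (Suc j) q - corr_coeff (Suc i) j q"
proof (cases "\<exists>k. Suc (Suc j) = Suc i + q + 2 * k")
  case False
  have "corr_coeff (Suc i) (Suc (Suc j)) q = 0" "corr_coeff (Suc (Suc i)) (Suc j) q = 0"
    "corr_coeff i (Suc j) q = 0" "corr_coeff (Suc i) j q = 0"
    "q \<noteq> 0 \<Longrightarrow> corr_coeff (Suc i) (Suc j) (q - 1) = 0"
    by (rule corr_coeff_eq_0, use False in presburger)+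
  then show ?thesis
    by simp
next
  case True
  then obtain k where k: "Suc (Suc j) = Suc i + q + 2 * k"
    by blast
  consider "q = 0" "k = 0" | K where "q = 0" "k = Suc K" | Q where "q = Suc Q" "k = 0"
    | Q K where "q = Suc Q" "k = Suc K"
    by (cases q; cases k) auto
  then show ?thesis
  proof cases
    case 1
    then show ?thesis using k by (simp add: corr_coeff_def)
  next
    case (2 K)
    then show ?thesis using k by (cases K) (simp_all add: corr_coeff_def)
  next
    case (3 Q)
    then show ?thesis using k by (simp add: corr_coeff_def corr_weight_pascal algebra_simps)
  next
    case (4 Q K)
    then show ?thesis using k by (simp add: corr_coeff_def corr_weight_rec algebra_simps)
  qed
qed

definition corr_poly :: "nat \<Rightarrow> nat \<Rightarrow> real poly" where
  "corr_poly i j = (\<Sum>q\<le>j. monom (corr_coeff i j q) q)"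

lemma coeff_corr_poly: "coeff (corr_poly i j) q = corr_coeff i j q"
  unfolding corr_poly_def by (auto simp: coeff_sum coeff_monom corr_coeff_def)

lemma poly_corr_poly: "poly (corr_poly i j) y = (\<Sum>q\<le>j. corr_coeff i j q * y ^ q)"
  by (simp add: corr_poly_def poly_sum poly_monom)

lemma corr_poly_0_left: "corr_poly 0 j = 0"
  by (rule poly_eqI) (simp add: coeff_corr_poly corr_coeff_def)

lemma poly_corr_poly_0_right: "poly (corr_poly i 0) y = 0"
  by (simp add: poly_corr_poly corr_coeff_def)

lemma poly_corr_poly_1_right: "poly (corr_poly i 1) y = (if i = 1 then 1 / 2 else 0)"
  by (auto simp: poly_corr_poly corr_coeff_def corr_weight_def)

lemma corr_poly_rec:
  "corr_poly (Suc i) (Suc (Suc j)) = smult 2 (pCons 0 (corr_poly (Suc i) (Suc j)))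
     + corr_poly (Suc (Suc i)) (Suc j) + corr_poly i (Suc j) - corr_poly (Suc i) j"
  by (rule poly_eqI) (simp add: coeff_corr_poly coeff_pCons corr_coeff_rec split: nat.split)

lemma cheb_corr_eq_poly: "cheb_corr i j y = pi * poly (corr_poly i j) y"
proof (induction j arbitrary: i rule: induct_nat_012)
  case 0
  then show ?case
    by (simp add: poly_corr_poly_0_right)
next
  case 1
  then show ?case
    using cheb_corr_1_right [of i y] poly_corr_poly_1_right [of i y] by simp
next
  case (ge2 j)
  show ?case
  proof (cases i)
    case 0
    then show ?thesis
      by (simp add: corr_poly_0_left)
  next
    case (Suc i')
    then show ?thesis
      by (simp add: cheb_corr_rec corr_poly_rec ge2 algebra_simps)
  qed
qed

lemma hyp_coeff_Suc:
  "hyp_coeff as bs (Suc k) = hyp_coeff as bs k * prod_list (map (\<lambda>a. a + real k) as)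
     / (prod_list (map (\<lambda>b. b + real k) bs) * (real k + 1))"
proof -
  have "prod_list (map (\<lambda>a. pochhammer a (Suc k)) xs)
      = prod_list (map (\<lambda>a. pochhammer a k) xs) * prod_list (map (\<lambda>a. a + real k) xs)"
    for xs :: "real list"
    by (induction xs) (simp_all add: pochhammer_Suc ac_simps)
  then show ?thesis
    unfolding hyp_coeff_def by (simp add: divide_inverse inverse_mult_distrib ac_simps)
qed

abbreviation F43_coeff :: "nat \<Rightarrow> nat \<Rightarrow> nat \<Rightarrow> real" where
  "F43_coeff m n \<equiv> hyp_coeff [- real m / 2, (1 - real m) / 2, (1 - real m) / 2, (2 - real m) / 2]
     [1 - real m, - real m - real n, real n + 2]"

lemma corr_weight_Suc_middle_Suc_Suc_left:
  "corr_weight p (Suc k) i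
       * ((real k + 1) * (real i + real k + 1) * (real k + real p + 1) * (real i + real k + real p + 1))
     = corr_weight (Suc (Suc p)) k i * (real p * (real p + 1)\<^sup>2 * (real p + 2))"
proof -
  have left_Suc: "corr_weight (Suc (Suc p)) k i * ((real p + 1) * (real p + 2))
      = corr_weight (Suc p) k i * ((real k + real p + 1) * (real i + real k + real p + 1))"
    using corr_weight_Suc_left [of "Suc p" k i] by (simp add: algebra_simps)
  have "corr_weight p (Suc k) i
       * ((real k + 1) * (real i + real k + 1) * (real k + real p + 1) * (real i + real k + real p + 1))
      = corr_weight p (Suc k) i * ((real k + 1) * (real i + real k + 1))
         * ((real k + real p + 1) * (real i + real k + real p + 1))"
    by (simp only: ac_simps)
  also have "\<dots> = real p * (real p + 1)
      * (corr_weight (Suc p) k i * ((real k + real p + 1) * (real i + real k + real p + 1)))"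
    unfolding corr_weight_Suc_middle corr_weight_Suc_left [symmetric] by (simp only: ac_simps)
  also have "\<dots> = corr_weight (Suc (Suc p)) k i * (real p * (real p + 1)\<^sup>2 * (real p + 2))"
    unfolding left_Suc [symmetric] by (simp add: power2_eq_square ac_simps)
  finally show ?thesis .
qed

lemma F43_coeff_eq_corr_weight:
  "2 * k \<le> m \<Longrightarrow> fact (m + n) / (fact m * fact n) * (2 ^ m / 2) * F43_coeff m n k * 4 ^ k
     = 2 ^ (m - 2 * k) / 2 * corr_weight (m - 2 * k) k (Suc n)"
proof (induction k)
  case 0
  have "real ((n + m) choose m) = fact (n + m) / (fact m * fact n)"
    by (simp add: binomial_fact)
  then show ?case
    by (simp add: hyp_coeff_def corr_weight_def add.commute mult_ac)
next
  case (Suc k)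
  then obtain p where m: "m = p + 2 + 2 * k"
    by (metis add.commute le_Suc_ex mult_Suc_right add_2_eq_Suc' add_Suc)
  define C where "C = fact (m + n) / (fact m * fact n) * (2 ^ m / 2 :: real)"
  define N where "N = real p * (real p + 1)\<^sup>2 * (real p + 2)"
  define D where "D = (real k + 1) * (real n + real k + 2) * (real k + real p + 1) * (real n + real k + real p + 2)"
  have IH: "C * F43_coeff m n k * 4 ^ k = 2 ^ Suc (Suc p) / 2 * corr_weight (Suc (Suc p)) k (Suc n)"
    using Suc m unfolding C_def by (simp add: numeral_2_eq_2)
  have "prod_list (map (\<lambda>a. a + real k) [- real m / 2, (1 - real m) / 2, (1 - real m) / 2, (2 - real m) / 2])
      = N / 16"
    unfolding N_def m by (simp add: field_simps power2_eq_square)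
  moreover have "prod_list (map (\<lambda>b. b + real k) [1 - real m, - real m - real n, real n + 2]) * (real k + 1) = D"
    unfolding D_def m by (simp add: algebra_simps)
  ultimately have F43_Suc: "F43_coeff m n (Suc k) = F43_coeff m n k * (N / 16) / D"
    by (simp only: hyp_coeff_Suc)
  have weight_Suc: "corr_weight p (Suc k) (Suc n) * D = corr_weight (Suc (Suc p)) k (Suc n) * N"
    using corr_weight_Suc_middle_Suc_Suc_left [of p k "Suc n"] unfolding D_def N_def
    by (simp add: algebra_simps)
  have "D > 0"
    unfolding D_def by (simp add: add_pos_nonneg)
  have "C * F43_coeff m n (Suc k) * 4 ^ Suc k = (C * F43_coeff m n k * 4 ^ k) * N / (4 * D)"
    unfolding F43_Suc by (simp add: field_simps)
  also have "\<dots> = 2 ^ p / 2 * (corr_weight (Suc (Suc p)) k (Suc n) * N) / D"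
    unfolding IH by (simp add: field_simps)
  also have "\<dots> = 2 ^ p / 2 * corr_weight p (Suc k) (Suc n)"
    unfolding weight_Suc [symmetric] using \<open>D > 0\<close> by simp
  finally show ?case
    unfolding C_def using m by (simp add: numeral_2_eq_2)
qed

lemma poly_corr_poly_eq_F43_poly:
  "poly (corr_poly (Suc n) (Suc (n + m))) y = fact (m + n) / (fact m * fact n) * (2 ^ m / 2) * F43_poly m n y"
proof -
  let ?c = "\<lambda>q. corr_coeff (Suc n) (Suc (n + m)) q * y ^ q"
  let ?K = "{..m div 2}"
  have inj: "inj_on (\<lambda>k. m - 2 * k) ?K"
    by (rule inj_onI) auto
  have "(\<Sum>q\<le>Suc (n + m). ?c q) = (\<Sum>q\<in>(\<lambda>k. m - 2 * k) ` ?K. ?c q)"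
  proof (rule sum.mono_neutral_right)
    show "\<forall>q\<in>{..Suc (n + m)} - (\<lambda>k. m - 2 * k) ` ?K. ?c q = 0"
    proof
      fix q assume q: "q \<in> {..Suc (n + m)} - (\<lambda>k. m - 2 * k) ` ?K"
      have "Suc (n + m) \<noteq> Suc n + q + 2 * k" for k
      proof
        assume "Suc (n + m) = Suc n + q + 2 * k"
        then have "k \<in> ?K" "q = m - 2 * k"
          by auto
        with q show False
          by blast
      qed
      then show "?c q = 0"
        by (simp add: corr_coeff_eq_0)
    qed
  qed auto
  also have "\<dots> = (\<Sum>k\<in>?K. ?c (m - 2 * k))"
    using inj by (simp add: sum.reindex)
  also have "\<dots> = (\<Sum>k\<in>?K. fact (m + n) / (fact m * fact n) * (2 ^ m / 2) * F43_coeff m n k * 4 ^ k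
      * y ^ (m - 2 * k))"
  proof (rule sum.cong)
    fix k assume "k \<in> ?K"
    then have "2 * k \<le> m"
      by auto
    moreover have "corr_coeff (Suc n) (Suc (n + m)) (m - 2 * k)
        = 2 ^ (m - 2 * k) / 2 * corr_weight (m - 2 * k) k (Suc n)"
      using \<open>2 * k \<le> m\<close> by (intro corr_coeff_eq) simp
    ultimately show "?c (m - 2 * k) = fact (m + n) / (fact m * fact n) * (2 ^ m / 2) * F43_coeff m n k * 4 ^ k
      * y ^ (m - 2 * k)"
      by (simp only: F43_coeff_eq_corr_weight)
  qed simp
  finally show ?thesis
    by (simp add: poly_corr_poly F43_poly_def sum_distrib_left mult_ac)
qed

theorem theorem4:
  fixes m n :: nat and y :: real
  shows "R_int m n y =
    pi * Gamma (real (m + n + 1)) / (Gamma (real (m + 1)) * Gamma (real (n + 1)))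
      * 2 powr (real m - 1) * F43_poly m n y"
proof -
  have Gamma_eq_fact: "Gamma (real (k + 1)) = fact k" for k
    using Gamma_fact [of k, where 'a = real] by (simp add: add.commute)
  have "R_int m n y = cheb_corr (Suc n) (Suc (n + m)) y"
    by (simp add: R_int_def cheb_corr_def)
  also have "\<dots> = pi * (fact (m + n) / (fact m * fact n) * (2 ^ m / 2) * F43_poly m n y)"
    by (simp add: cheb_corr_eq_poly poly_corr_poly_eq_F43_poly)
  also have "\<dots> = pi * Gamma (real (m + n + 1)) / (Gamma (real (m + 1)) * Gamma (real (n + 1)))
      * 2 powr (real m - 1) * F43_poly m n y"
    unfolding Gamma_eq_fact by (simp add: powr_diff powr_realpow)
  finally show ?thesis .
qed

end
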